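(* Let $d\ge2$ and $\overrightarrow{w}\in(0,\infty)^d$ with $w_1=\max\{w_1,\dots,w_d\}$ and $2w_1=\sum_{i=1}^dw_i$. Then for every random vector $\overrightarrow{U}=(U_1,\dots,U_d)$ with uniform$[0,1]$ marginals, $$\mathrm{Cov}\left(U_1,\sum_{i=1}^dw_iU_i\right)\ge0,$$ with equality if and only if $\overrightarrow{U}$ is $\overrightarrow{w}$-CM.
   Context: A random vector $\overrightarrow{U}=(U_1,\dots,U_d)$ with each $U_i$ uniform on $[0,1]$ is $\overrightarrow{w}$-CM if $P\left(\sum_{i=1}^d w_iU_i=\frac12\sum_{i=1}^d w_i\right)=1$. *)

theory Defs
  imports "HOL-Probability.Probability"
begin

definition covariance :: "'a measure \<Rightarrow> ('a \<Rightarrow> real) \<Rightarrow> ('a \<Rightarrow> real) \<Rightarrow> real" where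
  "covariance M X Y =
     (\<integral>x. (X x - (\<integral>z. X z \<partial>M)) * (Y x - (\<integral>z. Y z \<partial>M)) \<partial>M)"

definition uniform01 :: "'a measure \<Rightarrow> ('a \<Rightarrow> real) \<Rightarrow> bool" where
  "uniform01 M X \<longleftrightarrow>
     distributed M lborel X (\<lambda>x. indicator {0..1::real} x / measure lborel {0..1::real})"

definition w_CM :: "'a measure \<Rightarrow> nat \<Rightarrow> (nat \<Rightarrow> real) \<Rightarrow> (nat \<Rightarrow> 'a \<Rightarrow> real) \<Rightarrow> bool" where
  "w_CM M d w U \<longleftrightarrow>
     (\<forall>i\<in>{1..d}. uniform01 M (U i)) \<and>
     measure M {x \<in> space M. (\<Sum>i=1..d. w i * U i x) = (\<Sum>i=1..d. w i) / 2} = 1"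

end

theory Submission
  imports Defs
begin

text \<open>Centre the variables, \<open>V i = U i - 1/2\<close>, so that the covariance is
  \<open>E[V 1 * D]\<close> with \<open>D = (\<Sum>i. w i * V i)\<close>, and split \<open>D = w 1 * V 1 + R\<close>.
  The balance condition \<open>w 1 = (\<Sum>i\<ge>2. w i)\<close> and weighted Cauchy--Schwarz give
  \<open>R\<^sup>2 \<le> w 1 * Q\<close> with \<open>Q = (\<Sum>i\<ge>2. w i * (V i)\<^sup>2)\<close>, which rearranges pointwise to
  \<open>V 1 * D \<ge> D\<^sup>2 / (2 * w 1) + (w 1 * (V 1)\<^sup>2 - Q) / 2\<close>. All \<open>V i\<close> have the same
  second moment, so the last term has expectation zero and \<open>Cov \<ge> E[D\<^sup>2] / (2 * w 1) \<ge> 0\<close>,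
  with equality iff \<open>D = 0\<close> almost surely, which is the \<open>w\<close>-CM condition.\<close>

lemma square_weighted_sum_le:
  fixes w x :: "'i \<Rightarrow> real"
  assumes "\<forall>i\<in>A. 0 \<le> w i"
  shows "(\<Sum>i\<in>A. w i * x i)\<^sup>2 \<le> (\<Sum>i\<in>A. w i) * (\<Sum>i\<in>A. w i * (x i)\<^sup>2)"
proof -
  have "(\<Sum>i\<in>A. sqrt (w i) * (sqrt (w i) * x i))\<^sup>2
      \<le> (\<Sum>i\<in>A. (sqrt (w i))\<^sup>2) * (\<Sum>i\<in>A. (sqrt (w i) * x i)\<^sup>2)"
    by (rule Cauchy_Schwarz_ineq_sum)
  also have "\<dots> = (\<Sum>i\<in>A. w i) * (\<Sum>i\<in>A. w i * (x i)\<^sup>2)"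
    using assms by (simp add: power_mult_distrib)
  finally show ?thesis
    using assms by (simp flip: mult.assoc)
qed

lemma integrable_square_weighted_sum:
  fixes V :: "'i \<Rightarrow> 'a \<Rightarrow> real"
  assumes "\<forall>i\<in>A. 0 \<le> w i"
    and "\<forall>i\<in>A. V i \<in> borel_measurable M"
    and "\<forall>i\<in>A. integrable M (\<lambda>x. (V i x)\<^sup>2)"
  shows "integrable M (\<lambda>x. (\<Sum>i\<in>A. w i * V i x)\<^sup>2)"
proof (rule Bochner_Integration.integrable_bound)
  show "integrable M (\<lambda>x. (\<Sum>i\<in>A. w i) * (\<Sum>i\<in>A. w i * (V i x)\<^sup>2))"
    using assms(3) by auto
  show "(\<lambda>x. (\<Sum>i\<in>A. w i * V i x)\<^sup>2) \<in> borel_measurable M"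
    using assms(2) by (intro borel_measurable_power borel_measurable_sum borel_measurable_times) auto
  have "0 \<le> (\<Sum>i\<in>A. w i) * (\<Sum>i\<in>A. w i * (V i x)\<^sup>2)" for x
    using assms(1) by (intro mult_nonneg_nonneg sum_nonneg) auto
  then show "AE x in M. norm ((\<Sum>i\<in>A. w i * V i x)\<^sup>2)
      \<le> norm ((\<Sum>i\<in>A. w i) * (\<Sum>i\<in>A. w i * (V i x)\<^sup>2))"
    using square_weighted_sum_le[OF assms(1)] by simp
qed

lemma integrable_mult_of_squares_integrable:
  fixes f g :: "'a \<Rightarrow> real"
  assumes "f \<in> borel_measurable M" "g \<in> borel_measurable M"
    and "integrable M (\<lambda>x. (f x)\<^sup>2)" "integrable M (\<lambda>x. (g x)\<^sup>2)"
  shows "integrable M (\<lambda>x. f x * g x)"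
proof (rule Bochner_Integration.integrable_bound)
  show "integrable M (\<lambda>x. (f x)\<^sup>2 + (g x)\<^sup>2)"
    using assms(3,4) by simp
  have "\<bar>f x * g x\<bar> \<le> (f x)\<^sup>2 + (g x)\<^sup>2" for x
  proof -
    have "2 * (\<bar>f x\<bar> * \<bar>g x\<bar>) \<le> (f x)\<^sup>2 + (g x)\<^sup>2"
      using sum_squares_bound[of "\<bar>f x\<bar>" "\<bar>g x\<bar>"] by (simp add: mult.assoc)
    moreover have "0 \<le> \<bar>f x\<bar> * \<bar>g x\<bar>" by simp
    ultimately show ?thesis unfolding abs_mult by linarith
  qed
  then show "AE x in M. norm (f x * g x) \<le> norm ((f x)\<^sup>2 + (g x)\<^sup>2)"
    by simp
qed (use assms(1,2) in measurable)

context
  fixes M :: "'a measure" and d :: nat and w :: "nat \<Rightarrow> real"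
    and V :: "nat \<Rightarrow> 'a \<Rightarrow> real" and c :: real
  assumes w_nonneg: "\<forall>i\<in>{1..d}. 0 \<le> w i" and w1_pos: "0 < w 1"
    and w_balance: "w 1 = (\<Sum>i=2..d. w i)"
    and V_measurable: "\<forall>i\<in>{1..d}. V i \<in> borel_measurable M"
    and V_square_integrable: "\<forall>i\<in>{1..d}. integrable M (\<lambda>x. (V i x)\<^sup>2)"
    and V_second_moment: "\<forall>i\<in>{1..d}. (\<integral>x. (V i x)\<^sup>2 \<partial>M) = c"
begin

lemma integral_square_weighted_sum_le:
  "(\<integral>x. (\<Sum>i=1..d. w i * V i x)\<^sup>2 \<partial>M) / (2 * w 1)
    \<le> (\<integral>x. V 1 x * (\<Sum>i=1..d. w i * V i x) \<partial>M)"
proof -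
  define D where "D x = (\<Sum>i=1..d. w i * V i x)" for x
  define R where "R x = (\<Sum>i=2..d. w i * V i x)" for x
  define Q where "Q x = (\<Sum>i=2..d. w i * (V i x)\<^sup>2)" for x
  have two_le_d: "2 \<le> d"
  proof (rule ccontr)
    assume "\<not> 2 \<le> d"
    then have "{2..d} = {}" by auto
    then show False using w_balance w1_pos by simp
  qed
  then have one: "1 \<in> {1..d}" and sub: "{2..d} \<subseteq> {1..d}"
    by auto
  have D_split: "D x = w 1 * V 1 x + R x" for x
    unfolding D_def R_def
    using sum.atLeast_Suc_atMost[of 1 d] two_le_d by (simp add: numeral_2_eq_2)
  have R_square: "(R x)\<^sup>2 \<le> w 1 * Q x" for x
    unfolding R_def Q_def w_balance using w_nonneg sub by (intro square_weighted_sum_le) auto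
  have pointwise: "(D x)\<^sup>2 / (2 * w 1) + (w 1 * (V 1 x)\<^sup>2 - Q x) / 2 \<le> V 1 x * D x" for x
  proof -
    have "V 1 x * D x - ((D x)\<^sup>2 / (2 * w 1) + (w 1 * (V 1 x)\<^sup>2 - Q x) / 2)
        = (w 1 * Q x - (R x)\<^sup>2) / (2 * w 1)"
      unfolding D_split using w1_pos by (simp add: field_simps power2_eq_square)
    moreover have "0 \<le> (w 1 * Q x - (R x)\<^sup>2) / (2 * w 1)"
      using R_square[of x] w1_pos by simp
    ultimately show ?thesis by linarith
  qed
  have D_measurable: "D \<in> borel_measurable M"
    unfolding D_def using V_measurable by (intro borel_measurable_sum borel_measurable_times) auto
  have D_square_integrable: "integrable M (\<lambda>x. (D x)\<^sup>2)"
    unfolding D_def using w_nonneg V_measurable V_square_integrable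
    by (rule integrable_square_weighted_sum)
  have Q_integrable: "integrable M Q"
    unfolding Q_def using V_square_integrable sub by auto
  have Q_integral: "(\<integral>x. Q x \<partial>M) = w 1 * c"
  proof -
    have "(\<integral>x. Q x \<partial>M) = (\<Sum>i=2..d. w i * c)"
      unfolding Q_def using V_square_integrable V_second_moment sub
      by (subst Bochner_Integration.integral_sum) auto
    then show ?thesis unfolding w_balance by (simp add: sum_distrib_right)
  qed
  have V1_square_integrable: "integrable M (\<lambda>x. (V 1 x)\<^sup>2)"
    using V_square_integrable one by blast
  have "(\<integral>x. (D x)\<^sup>2 \<partial>M) / (2 * w 1)
      = (\<integral>x. (D x)\<^sup>2 / (2 * w 1) + (w 1 * (V 1 x)\<^sup>2 - Q x) / 2 \<partial>M)"
    using D_square_integrable V1_square_integrable Q_integrable Q_integral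
      V_second_moment one by simp
  also have "\<dots> \<le> (\<integral>x. V 1 x * D x \<partial>M)"
    using pointwise D_square_integrable V1_square_integrable Q_integrable
      integrable_mult_of_squares_integrable[of "V 1" M D] V_measurable D_measurable one
    by (intro integral_mono) auto
  finally show ?thesis unfolding D_def .
qed

lemma integral_mult_weighted_sum_nonneg:
  "0 \<le> (\<integral>x. V 1 x * (\<Sum>i=1..d. w i * V i x) \<partial>M)"
proof -
  have "0 \<le> (\<integral>x. (\<Sum>i=1..d. w i * V i x)\<^sup>2 \<partial>M) / (2 * w 1)"
    using w1_pos by simp
  then show ?thesis
    using integral_square_weighted_sum_le by linarith
qed

lemma integral_mult_weighted_sum_eq_0_iff:
  "(\<integral>x. V 1 x * (\<Sum>i=1..d. w i * V i x) \<partial>M) = 0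
    \<longleftrightarrow> (AE x in M. (\<Sum>i=1..d. w i * V i x) = 0)"
proof
  assume "(\<integral>x. V 1 x * (\<Sum>i=1..d. w i * V i x) \<partial>M) = 0"
  then have "(\<integral>x. (\<Sum>i=1..d. w i * V i x)\<^sup>2 \<partial>M) \<le> 0"
    using integral_square_weighted_sum_le w1_pos by (simp add: divide_le_0_iff)
  then have "(\<integral>x. (\<Sum>i=1..d. w i * V i x)\<^sup>2 \<partial>M) = 0"
    by (rule antisym) simp
  moreover have "integrable M (\<lambda>x. (\<Sum>i=1..d. w i * V i x)\<^sup>2)"
    using w_nonneg V_measurable V_square_integrable by (rule integrable_square_weighted_sum)
  ultimately show "AE x in M. (\<Sum>i=1..d. w i * V i x) = 0"
    by (simp add: integral_nonneg_eq_0_iff_AE)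
next
  assume "AE x in M. (\<Sum>i=1..d. w i * V i x) = 0"
  then have "AE x in M. V 1 x * (\<Sum>i=1..d. w i * V i x) = 0"
    by eventually_elim simp
  then show "(\<integral>x. V 1 x * (\<Sum>i=1..d. w i * V i x) \<partial>M) = 0"
    by (rule integral_eq_zero_AE)
qed

end

context prob_space
begin

lemma uniform01_measurable: "uniform01 M X \<Longrightarrow> X \<in> borel_measurable M"
  unfolding uniform01_def by (drule distributed_measurable) simp

lemma uniform01_expectation: "uniform01 M X \<Longrightarrow> expectation X = 1/2"
  unfolding uniform01_def by (drule uniform_distributed_expectation) simp

lemma uniform01_centered_second_moment:
  assumes "uniform01 M X"
  shows "expectation (\<lambda>x. (X x - 1/2)\<^sup>2) = 1/12"
  using uniform_distributed_variance[of X 0 1] uniform01_expectation[OF assms] assms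
  unfolding uniform01_def by simp

lemma AE_uniform01_in_unit_interval:
  assumes "uniform01 M X"
  shows "AE x in M. 0 \<le> X x \<and> X x \<le> 1"
proof -
  have D: "distributed M lborel X (\<lambda>x. indicator {0..1::real} x / measure lborel {0..1::real})"
    using assms unfolding uniform01_def .
  have X_measurable: "X \<in> borel_measurable M"
    using assms by (rule uniform01_measurable)
  have "\<P>(x in M. X x \<le> 0) = 0" "\<P>(x in M. X x \<le> 1) = 1"
    using uniform_distributed_measure[OF D, of 0] uniform_distributed_measure[OF D, of 1] by simp_all
  then have "AE x in M. 0 < X x" "AE x in M. X x \<le> 1"
    using X_measurable AE_in_set_eq_1[of "{x\<in>space M. X x \<le> 1}"]
    by (auto simp: prob_eq_0 emeasure_eq_measure)
  then show ?thesis by eventually_elim auto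
qed

lemma integrable_uniform01:
  assumes "uniform01 M X"
  shows "integrable M X"
proof (rule integrable_const_bound[where B=1])
  show "AE x in M. norm (X x) \<le> 1"
    using AE_uniform01_in_unit_interval[OF assms] by eventually_elim auto
qed (rule uniform01_measurable[OF assms])

lemma integrable_uniform01_centered_square:
  assumes "uniform01 M X"
  shows "integrable M (\<lambda>x. (X x - 1/2)\<^sup>2)"
proof (rule integrable_const_bound[where B=1])
  show "AE x in M. norm ((X x - 1/2)\<^sup>2) \<le> 1"
    using AE_uniform01_in_unit_interval[OF assms]
  proof eventually_elim
    case (elim x)
    then have "\<bar>X x - 1/2\<bar>\<^sup>2 \<le> 1\<^sup>2" by (intro power_mono) auto
    then show ?case by simp
  qed
qed (use uniform01_measurable[OF assms] in measurable)

lemma covariance_uniform01_weighted_sum: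
  fixes U :: "nat \<Rightarrow> 'a \<Rightarrow> real" and d :: nat
  assumes "\<forall>i\<in>{1..d}. uniform01 M (U i)" and "1 \<le> d"
  shows "covariance M (U 1) (\<lambda>x. \<Sum>i=1..d. w i * U i x)
    = expectation (\<lambda>x. (U 1 x - 1/2) * (\<Sum>i=1..d. w i * (U i x - 1/2)))"
proof -
  have "expectation (\<lambda>x. \<Sum>i=1..d. w i * U i x) = (\<Sum>i=1..d. w i * expectation (U i))"
    using assms(1) integrable_uniform01 by (subst Bochner_Integration.integral_sum) auto
  also have "\<dots> = (\<Sum>i=1..d. w i / 2)"
    using assms(1) uniform01_expectation by (intro sum.cong) auto
  finally have sum_expectation: "expectation (\<lambda>x. \<Sum>i=1..d. w i * U i x) = (\<Sum>i=1..d. w i / 2)" .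
  have first_expectation: "expectation (U 1) = 1/2"
    using assms by (simp add: uniform01_expectation)
  have centered: "(\<Sum>i=1..d. w i * U i x) - (\<Sum>i=1..d. w i / 2) = (\<Sum>i=1..d. w i * (U i x - 1/2))" for x
    by (simp add: sum_subtractf algebra_simps)
  show ?thesis
    unfolding covariance_def sum_expectation first_expectation centered ..
qed

lemma w_CM_iff_AE:
  fixes U :: "nat \<Rightarrow> 'a \<Rightarrow> real"
  assumes "\<forall>i\<in>{1..d}. uniform01 M (U i)"
  shows "w_CM M d w U \<longleftrightarrow> (AE x in M. (\<Sum>i=1..d. w i * (U i x - 1/2)) = 0)"
proof -
  have [measurable]: "(\<lambda>x. \<Sum>i=1..d. w i * U i x) \<in> borel_measurable M"
    using assms uniform01_measurable by (intro borel_measurable_sum borel_measurable_times) auto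
  have "(\<Sum>i=1..d. w i * (U i x - 1/2)) = 0 \<longleftrightarrow> (\<Sum>i=1..d. w i * U i x) = (\<Sum>i=1..d. w i) / 2" for x
    by (simp add: sum_subtractf right_diff_distrib sum_divide_distrib)
  moreover have "{x \<in> space M. (\<Sum>i=1..d. w i * U i x) = (\<Sum>i=1..d. w i) / 2} \<in> events"
    by measurable
  ultimately show ?thesis
    using assms unfolding w_CM_def by (auto simp flip: AE_in_set_eq_1 elim: AE_mp)
qed

end

theorem mainTheorem9:
  fixes M :: "'a measure" and d :: nat and w :: "nat \<Rightarrow> real" and U :: "nat \<Rightarrow> 'a \<Rightarrow> real"
  assumes "prob_space M"
    and "d \<ge> 2"
    and "\<forall>i\<in>{1..d}. w i > 0"
    and "w 1 = Max (w ` {1..d})"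
    and "2 * w 1 = (\<Sum>i=1..d. w i)"
    and "\<forall>i\<in>{1..d}. uniform01 M (U i)"
  shows "covariance M (U 1) (\<lambda>x. \<Sum>i=1..d. w i * U i x) \<ge> 0
    \<and> (covariance M (U 1) (\<lambda>x. \<Sum>i=1..d. w i * U i x) = 0 \<longleftrightarrow> w_CM M d w U)"
proof -
  interpret prob_space M by fact
  define V where "V i x = U i x - 1/2" for i x
  have w_nonneg: "\<forall>i\<in>{1..d}. 0 \<le> w i" and w1_pos: "0 < w 1"
    using assms(2,3) by auto
  have w_balance: "w 1 = (\<Sum>i=2..d. w i)"
    using assms(2,5) sum.atLeast_Suc_atMost[of 1 d w] by (simp add: numeral_2_eq_2)
  have V_measurable: "\<forall>i\<in>{1..d}. V i \<in> borel_measurable M"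
    using assms(6) uniform01_measurable unfolding V_def by auto
  have V_square_integrable: "\<forall>i\<in>{1..d}. integrable M (\<lambda>x. (V i x)\<^sup>2)"
    and V_second_moment: "\<forall>i\<in>{1..d}. expectation (\<lambda>x. (V i x)\<^sup>2) = 1/12"
    using assms(6) integrable_uniform01_centered_square uniform01_centered_second_moment
    unfolding V_def by auto
  note centered_hyps = w_nonneg w1_pos w_balance V_measurable V_square_integrable V_second_moment
  have "0 \<le> expectation (\<lambda>x. V 1 x * (\<Sum>i=1..d. w i * V i x))"
    and "expectation (\<lambda>x. V 1 x * (\<Sum>i=1..d. w i * V i x)) = 0
      \<longleftrightarrow> (AE x in M. (\<Sum>i=1..d. w i * V i x) = 0)"
    using integral_mult_weighted_sum_nonneg[OF centered_hyps]
      integral_mult_weighted_sum_eq_0_iff[OF centered_hyps] by auto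
  moreover have "covariance M (U 1) (\<lambda>x. \<Sum>i=1..d. w i * U i x)
      = expectation (\<lambda>x. V 1 x * (\<Sum>i=1..d. w i * V i x))"
    unfolding V_def using assms(2,6) by (intro covariance_uniform01_weighted_sum) auto
  ultimately show ?thesis
    using w_CM_iff_AE[OF assms(6)] unfolding V_def by simp
qed

end
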